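(* Let $m,n\ge1$. For every instance $(Q,c,d)$ of BQAP1, the set $\mathcal{G}_1=\{(x,y)\text{ feasible for BQAP1}: f_1(x,y)\ge \mathcal{A}_1(Q,c,d)\}$ satisfies $|\mathcal{G}_1|\ge n^{m-1}m^{n-1}$. For every instance $(Q,c,d)$ of BQAP2, the set $\mathcal{G}_2=\{(x,y)\text{ feasible for BQAP2}: f_2(x,y)\ge \mathcal{A}_2(Q,c,d)\}$ satisfies $|\mathcal{G}_2|\ge m^{m-1}n^{n-1}$.
   Context: $M=\{1,\dots,m\}$, $N=\{1,\dots,n\}$. BQAP1: data $Q=(q_{ijk\ell})$ ($m\times n\times m\times n$ real array), real $m\times n$ matrices $c,d$; feasible solutions are pairs $(x,y)$ of $m\times n$ 0-1 matrices with $\sum_{j=1}^n x_{ij}=1$ for all $i\in M$ and $\sum_{i=1}^m y_{ij}=1$ for all $j\in N$; objective $f_1(x,y)=\sum_{i,k\in M}\sum_{j,\ell\in N} q_{ijk\ell}x_{ij}y_{k\ell}+\sum_{i\in M,j\in N}c_{ij}x_{ij}+\sum_{i\in M,j\in N}d_{ij}y_{ij}$. BQAP2: data $Q$ ($m\times m\times n\times n$ real array), real $m\times m$ matrix $c$, real $n\times n$ matrix $d$; feasible solutions are pairs $(x,y)$ with $x$ an $m\times m$ 0-1 matrix with $\sum_{j=1}^m x_{ij}=1$ for all $i\in M$ and $y$ an $n\times n$ 0-1 matrix with $\sum_{i=1}^n y_{ij}=1$ for all $j\in N$; objective $f_2(x,y)=\sum_{i,j\in M}\sum_{k,\ell\in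 N} q_{ijk\ell}x_{ij}y_{k\ell}+\sum_{i,j\in M}c_{ij}x_{ij}+\sum_{i,j\in N}d_{ij}y_{ij}$. $\mathcal{A}_1(Q,c,d)$ (resp. $\mathcal{A}_2(Q,c,d)$) denotes the arithmetic mean of $f_1$ (resp. $f_2$) over all feasible solutions of BQAP1 (resp. BQAP2). *)

theory Defs
  imports Complex_Main
begin

text \<open>Matrices are functions nat \<Rightarrow> nat \<Rightarrow> real, indices 1-based; entries outside
the index range are fixed to 0 so that the feasible sets are finite sets of matrices.\<close>

definition zero_one_mat :: "nat \<Rightarrow> nat \<Rightarrow> (nat \<Rightarrow> nat \<Rightarrow> real) set" where
  "zero_one_mat r s = {x. (\<forall>i j. x i j \<in> {0, 1}) \<and>
      (\<forall>i j. (i \<notin> {1..r} \<or> j \<notin> {1..s}) \<longrightarrow> x i j = 0)}"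

definition row_assign :: "nat \<Rightarrow> nat \<Rightarrow> (nat \<Rightarrow> nat \<Rightarrow> real) set" where
  "row_assign r s = {x \<in> zero_one_mat r s. \<forall>i\<in>{1..r}. (\<Sum>j=1..s. x i j) = 1}"

definition col_assign :: "nat \<Rightarrow> nat \<Rightarrow> (nat \<Rightarrow> nat \<Rightarrow> real) set" where
  "col_assign r s = {y \<in> zero_one_mat r s. \<forall>j\<in>{1..s}. (\<Sum>i=1..r. y i j) = 1}"

definition feas1 :: "nat \<Rightarrow> nat \<Rightarrow> ((nat \<Rightarrow> nat \<Rightarrow> real) \<times> (nat \<Rightarrow> nat \<Rightarrow> real)) set" where
  "feas1 m n = row_assign m n \<times> col_assign m n"

definition feas2 :: "nat \<Rightarrow> nat \<Rightarrow> ((nat \<Rightarrow> nat \<Rightarrow> real) \<times> (nat \<Rightarrow> nat \<Rightarrow> real)) set" where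
  "feas2 m n = row_assign m m \<times> col_assign n n"

definition f1 :: "nat \<Rightarrow> nat \<Rightarrow> (nat \<Rightarrow> nat \<Rightarrow> nat \<Rightarrow> nat \<Rightarrow> real) \<Rightarrow> (nat \<Rightarrow> nat \<Rightarrow> real)
    \<Rightarrow> (nat \<Rightarrow> nat \<Rightarrow> real) \<Rightarrow> (nat \<Rightarrow> nat \<Rightarrow> real) \<Rightarrow> (nat \<Rightarrow> nat \<Rightarrow> real) \<Rightarrow> real" where
  "f1 m n Q c d x y =
     (\<Sum>i\<in>{1..m}. \<Sum>k\<in>{1..m}. \<Sum>j\<in>{1..n}. \<Sum>l\<in>{1..n}. Q i j k l * x i j * y k l)
     + (\<Sum>i\<in>{1..m}. \<Sum>j\<in>{1..n}. c i j * x i j)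
     + (\<Sum>i\<in>{1..m}. \<Sum>j\<in>{1..n}. d i j * y i j)"

definition f2 :: "nat \<Rightarrow> nat \<Rightarrow> (nat \<Rightarrow> nat \<Rightarrow> nat \<Rightarrow> nat \<Rightarrow> real) \<Rightarrow> (nat \<Rightarrow> nat \<Rightarrow> real)
    \<Rightarrow> (nat \<Rightarrow> nat \<Rightarrow> real) \<Rightarrow> (nat \<Rightarrow> nat \<Rightarrow> real) \<Rightarrow> (nat \<Rightarrow> nat \<Rightarrow> real) \<Rightarrow> real" where
  "f2 m n Q c d x y =
     (\<Sum>i\<in>{1..m}. \<Sum>j\<in>{1..m}. \<Sum>k\<in>{1..n}. \<Sum>l\<in>{1..n}. Q i j k l * x i j * y k l)
     + (\<Sum>i\<in>{1..m}. \<Sum>j\<in>{1..m}. c i j * x i j)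
     + (\<Sum>i\<in>{1..n}. \<Sum>j\<in>{1..n}. d i j * y i j)"

definition A1 where
  "A1 m n Q c d = (\<Sum>(x, y)\<in>feas1 m n. f1 m n Q c d x y) / real (card (feas1 m n))"

definition A2 where
  "A2 m n Q c d = (\<Sum>(x, y)\<in>feas2 m n. f2 m n Q c d x y) / real (card (feas2 m n))"

end

theory Submission
  imports Defs "HOL-Library.FuncSet" "HOL-Number_Theory.Cong"
begin

text \<open>Let \<open>x\<close> range over the \<open>p \<times> q\<close> row assignments and \<open>y\<close> over the \<open>r \<times> s\<close> column
  assignments. Rotating the columns of \<open>x\<close> cyclically by \<open>a\<close> and the rows of \<open>y\<close> by \<open>b\<close> gives
  \<open>q r\<close> bijections of the feasible set. Summed over all \<open>(a, b)\<close>, each entry of the rotated \<open>x\<close>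
  (resp. \<open>y\<close>) takes the value 1 exactly once, so the sum of the objective over such an orbit
  is the same for every feasible solution. Hence every orbit contains a solution of value at
  least the average \<open>\<A>\<close>, i.e. the \<open>q r\<close> preimages of the set of such solutions cover the
  feasible set, whose size is at least \<open>q\<^sup>p r\<^sup>s\<close>.\<close>

lemma averaging_card_bound:
  fixes h :: "'a \<Rightarrow> real" and \<phi> :: "'b \<Rightarrow> 'a \<Rightarrow> 'a"
  assumes "finite F" "F \<noteq> {}" "finite T" "T \<noteq> {}"
    and bij: "\<And>t. t \<in> T \<Longrightarrow> bij_betw (\<phi> t) F F"
    and orbit_sum: "\<And>p. p \<in> F \<Longrightarrow> (\<Sum>t\<in>T. h (\<phi> t p)) = C"
  shows "card F \<le> card T * card {p\<in>F. (\<Sum>p\<in>F. h p) / card F \<le> h p}"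
proof -
  define G where "G = {p\<in>F. (\<Sum>p\<in>F. h p) / card F \<le> h p}"
  have "(\<Sum>p\<in>F. h (\<phi> t p)) = (\<Sum>p\<in>F. h p)" if "t \<in> T" for t
    by (rule sum.reindex_bij_betw[OF bij[OF that]])
  then have "real (card T) * (\<Sum>p\<in>F. h p) = (\<Sum>t\<in>T. \<Sum>p\<in>F. h (\<phi> t p))"
    by (simp add: sum_distrib_left)
  also have "\<dots> = real (card F) * C"
    using orbit_sum by (subst sum.swap) simp
  finally have average: "(\<Sum>p\<in>F. h p) / card F = C / card T"
    using assms(1-4) by (simp add: field_simps)
  have orbit_meets_G: "\<exists>t\<in>T. \<phi> t p \<in> G" if "p \<in> F" for p
  proof (rule ccontr)
    assume "\<not> (\<exists>t\<in>T. \<phi> t p \<in> G)"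
    then have "h (\<phi> t p) < C / card T" if "t \<in> T" for t
      using that bij_betw_apply[OF bij \<open>p \<in> F\<close>] average by (force simp: G_def)
    then have "(\<Sum>t\<in>T. h (\<phi> t p)) < (\<Sum>t\<in>T. C / card T)"
      by (rule sum_strict_mono[OF \<open>finite T\<close> \<open>T \<noteq> {}\<close>])
    then show False
      using orbit_sum[OF \<open>p \<in> F\<close>] \<open>finite T\<close> \<open>T \<noteq> {}\<close> by simp
  qed
  have "card F \<le> card (\<Union>t\<in>T. {p\<in>F. \<phi> t p \<in> G})"
    using orbit_meets_G by (intro card_mono) (auto simp: \<open>finite F\<close> \<open>finite T\<close>)
  also have "\<dots> \<le> (\<Sum>t\<in>T. card {p\<in>F. \<phi> t p \<in> G})"
    by (rule card_UN_le[OF \<open>finite T\<close>])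
  also have "\<dots> \<le> (\<Sum>t\<in>T. card G)"
  proof (rule sum_mono)
    fix t assume "t \<in> T"
    then have "inj_on (\<phi> t) {p\<in>F. \<phi> t p \<in> G}"
      using bij by (auto simp: bij_betw_def intro: inj_on_subset)
    then show "card {p\<in>F. \<phi> t p \<in> G} \<le> card G"
      by (rule card_inj_on_le) (auto simp: G_def \<open>finite F\<close>)
  qed
  finally show ?thesis by (simp add: G_def)
qed

lemma inj_on_card_eq_imp_bij_betw:
  assumes "inj_on f A" "f ` A \<subseteq> B" "finite B" "card A = card B"
  shows "bij_betw f A B"
  using assms card_subset_eq[of B "f ` A"] by (simp add: bij_betw_def card_image)

lemma inj_on_add_mod: "inj_on (\<lambda>x::nat. (x + a) mod q) {..<q}"
proof (rule inj_onI)
  fix x y assume "x \<in> {..<q}" "y \<in> {..<q}" "(x + a) mod q = (y + a) mod q"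
  then show "x = y"
    using cong_add_rcancel_nat[of x a y q] by (simp add: cong_def)
qed

definition cyc_shift :: "nat \<Rightarrow> nat \<Rightarrow> nat \<Rightarrow> nat" where
  "cyc_shift q a j = (if j \<in> {1..q} then (j - 1 + a) mod q + 1 else j)"

lemma cyc_shift_in_range:
  assumes "j \<in> {1..q}"
  shows "cyc_shift q a j \<in> {1..q}"
proof -
  have "0 < q" using assms by simp
  then show ?thesis using assms by (simp add: cyc_shift_def Suc_le_eq)
qed

lemma bij_betw_cyc_shift: "bij_betw (cyc_shift q a) {1..q} {1..q}"
proof (rule inj_on_card_eq_imp_bij_betw)
  show "inj_on (cyc_shift q a) {1..q}"
  proof (rule inj_onI)
    fix j j' assume "j \<in> {1..q}" "j' \<in> {1..q}" "cyc_shift q a j = cyc_shift q a j'"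
    then have "(j - 1 + a) mod q = (j' - 1 + a) mod q"
      by (simp only: cyc_shift_def if_True)
    moreover have "j - 1 \<in> {..<q}" "j' - 1 \<in> {..<q}"
      using \<open>j \<in> {1..q}\<close> \<open>j' \<in> {1..q}\<close> by auto
    ultimately have "j - 1 = j' - 1"
      by (rule inj_onD[OF inj_on_add_mod])
    then show "j = j'"
      using \<open>j \<in> {1..q}\<close> \<open>j' \<in> {1..q}\<close> by auto
  qed
next
  show "cyc_shift q a ` {1..q} \<subseteq> {1..q}"
    using cyc_shift_in_range by blast
qed simp_all

lemma bij_betw_cyc_shift_offset:
  assumes "j \<in> {1..q}"
  shows "bij_betw (\<lambda>a. cyc_shift q a j) {..<q} {1..q}"
proof (rule inj_on_card_eq_imp_bij_betw)
  show "inj_on (\<lambda>a. cyc_shift q a j) {..<q}"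
  proof (rule inj_onI)
    fix a a' assume "a \<in> {..<q}" "a' \<in> {..<q}" "cyc_shift q a j = cyc_shift q a' j"
    then have "(j - 1 + a) mod q = (j - 1 + a') mod q"
      using assms by (simp only: cyc_shift_def if_True)
    then have "(a + (j - 1)) mod q = (a' + (j - 1)) mod q"
      by (simp only: add.commute)
    then show "a = a'"
      using \<open>a \<in> {..<q}\<close> \<open>a' \<in> {..<q}\<close> by (rule inj_onD[OF inj_on_add_mod])
  qed
next
  show "(\<lambda>a. cyc_shift q a j) ` {..<q} \<subseteq> {1..q}"
    using cyc_shift_in_range[OF assms] by blast
qed simp_all

lemma cyc_shift_outside: "j \<notin> {1..q} \<Longrightarrow> cyc_shift q a j = j"
  unfolding cyc_shift_def by (rule if_not_P)

lemma surj_cyc_shift: "surj (cyc_shift q a)"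
proof -
  have "{1..q} \<subseteq> range (cyc_shift q a)"
    using bij_betw_cyc_shift[of q a] by (auto simp: bij_betw_def)
  moreover have "j \<in> range (cyc_shift q a)" if "j \<notin> {1..q}" for j
    using cyc_shift_outside[OF that] by (metis rangeI)
  ultimately show ?thesis by blast
qed

definition transpose_mat :: "(nat \<Rightarrow> nat \<Rightarrow> 'a) \<Rightarrow> nat \<Rightarrow> nat \<Rightarrow> 'a" where
  "transpose_mat x = (\<lambda>i j. x j i)"

lemma transpose_mat_transpose_mat [simp]: "transpose_mat (transpose_mat x) = x"
  by (simp add: transpose_mat_def)

lemma transpose_mat_in_row_assign_iff: "transpose_mat y \<in> row_assign s r \<longleftrightarrow> y \<in> col_assign r s"
  by (auto simp: transpose_mat_def row_assign_def col_assign_def zero_one_mat_def)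

lemma transpose_mat_in_col_assign_iff: "transpose_mat x \<in> col_assign r s \<longleftrightarrow> x \<in> row_assign s r"
  using transpose_mat_in_row_assign_iff[of "transpose_mat x"] by simp

lemma bij_betw_transpose_col_row: "bij_betw transpose_mat (col_assign r s) (row_assign s r)"
  by (rule bij_betwI[where g = transpose_mat])
    (auto simp: transpose_mat_in_row_assign_iff transpose_mat_in_col_assign_iff)

lemma bij_betw_transpose_row_col: "bij_betw transpose_mat (row_assign s r) (col_assign r s)"
  by (rule bij_betwI[where g = transpose_mat])
    (auto simp: transpose_mat_in_row_assign_iff transpose_mat_in_col_assign_iff)

lemma finite_zero_one_mat: "finite (zero_one_mat r s)"
proof -
  let ?indicator = "\<lambda>S i j. if (i, j) \<in> S then 1 else 0 :: real"
  have "x = ?indicator {(i, j). i \<in> {1..r} \<and> j \<in> {1..s} \<and> x i j = 1}"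
    if "x \<in> zero_one_mat r s" for x
    using that by (fastforce simp: zero_one_mat_def)
  then have "zero_one_mat r s \<subseteq> ?indicator ` Pow ({1..r} \<times> {1..s})"
    by blast
  then show ?thesis
    by (rule finite_subset) simp
qed

lemma finite_row_assign: "finite (row_assign p q)"
  by (rule finite_subset[OF _ finite_zero_one_mat]) (auto simp: row_assign_def)

lemma finite_col_assign: "finite (col_assign r s)"
  by (rule finite_subset[OF _ finite_zero_one_mat]) (auto simp: col_assign_def)

lemma power_le_card_row_assign: "q ^ p \<le> card (row_assign p q)"
proof -
  define mat_of :: "(nat \<Rightarrow> nat) \<Rightarrow> nat \<Rightarrow> nat \<Rightarrow> real" where
    "mat_of \<phi> = (\<lambda>i j. if i \<in> {1..p} \<and> j \<in> {1..q} \<and> \<phi> i = j then 1 else 0)" for \<phi>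
  have "mat_of \<phi> \<in> row_assign p q" if "\<phi> \<in> {1..p} \<rightarrow>\<^sub>E {1..q}" for \<phi>
  proof -
    have "(\<Sum>j=1..q. mat_of \<phi> i j) = 1" if "i \<in> {1..p}" for i
      using \<open>\<phi> \<in> _\<close> that by (auto simp: mat_of_def sum.delta)
    then show ?thesis by (auto simp: row_assign_def zero_one_mat_def mat_of_def)
  qed
  moreover have "inj_on mat_of ({1..p} \<rightarrow>\<^sub>E {1..q})"
  proof (rule inj_onI)
    fix \<phi> \<psi> assume \<phi>: "\<phi> \<in> {1..p} \<rightarrow>\<^sub>E {1..q}" and \<psi>: "\<psi> \<in> {1..p} \<rightarrow>\<^sub>E {1..q}"
      and eq: "mat_of \<phi> = mat_of \<psi>"
    show "\<phi> = \<psi>"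
    proof (rule PiE_ext[OF \<phi> \<psi>])
      fix i assume "i \<in> {1..p}"
      with \<phi> have "mat_of \<phi> i (\<phi> i) = 1" by (auto simp: mat_of_def)
      then have "mat_of \<psi> i (\<phi> i) = 1" by (simp only: eq)
      then show "\<phi> i = \<psi> i" by (simp add: mat_of_def split: if_splits)
    qed
  qed
  ultimately have "card ({1..p} \<rightarrow>\<^sub>E {1..q}) \<le> card (row_assign p q)"
    by (intro card_inj_on_le[OF _ _ finite_row_assign]) auto
  then show ?thesis by (simp add: card_PiE)
qed

lemma power_le_card_col_assign: "r ^ s \<le> card (col_assign r s)"
  using power_le_card_row_assign[of r s] bij_betw_same_card[OF bij_betw_transpose_col_row]
  by simp

definition shift_cols :: "nat \<Rightarrow> nat \<Rightarrow> (nat \<Rightarrow> nat \<Rightarrow> real) \<Rightarrow> nat \<Rightarrow> nat \<Rightarrow> real" where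
  "shift_cols q a x = (\<lambda>i j. x i (cyc_shift q a j))"

definition shift_rows :: "nat \<Rightarrow> nat \<Rightarrow> (nat \<Rightarrow> nat \<Rightarrow> real) \<Rightarrow> nat \<Rightarrow> nat \<Rightarrow> real" where
  "shift_rows r b y = (\<lambda>k l. y (cyc_shift r b k) l)"

lemma shift_rows_eq_transpose:
  "shift_rows r b = transpose_mat \<circ> shift_cols r b \<circ> transpose_mat"
  by (simp add: fun_eq_iff shift_rows_def shift_cols_def transpose_mat_def)

lemma shift_cols_in_row_assign:
  assumes "x \<in> row_assign p q"
  shows "shift_cols q a x \<in> row_assign p q"
proof -
  have "(\<Sum>j=1..q. x i (cyc_shift q a j)) = (\<Sum>j=1..q. x i j)" for i
    by (rule sum.reindex_bij_betw[OF bij_betw_cyc_shift])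
  then show ?thesis
    using assms cyc_shift_outside by (auto simp: row_assign_def zero_one_mat_def shift_cols_def)
qed

lemma inj_shift_cols: "inj (shift_cols q a)"
proof (rule injI)
  fix x x' assume "shift_cols q a x = shift_cols q a x'"
  then have "x i (cyc_shift q a j) = x' i (cyc_shift q a j)" for i j
    by (metis shift_cols_def)
  then show "x = x'"
    using surj_cyc_shift[of q a] by (metis ext surjD)
qed

lemma bij_betw_shift_cols: "bij_betw (shift_cols q a) (row_assign p q) (row_assign p q)"
  using inj_on_subset[OF inj_shift_cols] shift_cols_in_row_assign finite_row_assign
  by (simp add: bij_betw_def endo_inj_surj image_subset_iff)

lemma bij_betw_shift_rows: "bij_betw (shift_rows r b) (col_assign r s) (col_assign r s)"
  unfolding shift_rows_eq_transpose
  by (rule bij_betw_trans[OF bij_betw_transpose_col_row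
        bij_betw_trans[OF bij_betw_shift_cols bij_betw_transpose_row_col]])

lemma sum_shift_cols_row_assign:
  assumes "x \<in> row_assign p q" "i \<in> {1..p}" "j \<in> {1..q}"
  shows "(\<Sum>a<q. shift_cols q a x i j) = 1"
  using sum.reindex_bij_betw[OF bij_betw_cyc_shift_offset[OF assms(3)], of "x i"] assms(1,2)
  by (simp add: row_assign_def shift_cols_def)

lemma sum_shift_rows_col_assign:
  assumes "y \<in> col_assign r s" "k \<in> {1..r}" "l \<in> {1..s}"
  shows "(\<Sum>b<r. shift_rows r b y k l) = 1"
proof -
  have "transpose_mat y \<in> row_assign s r"
    using assms(1) by (simp add: transpose_mat_in_row_assign_iff)
  then show ?thesis
    using sum_shift_cols_row_assign[of "transpose_mat y" s r l k] assms(2,3)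
    by (simp add: shift_rows_eq_transpose transpose_mat_def)
qed

text \<open>\<open>x\<close> is \<open>p \<times> q\<close> and \<open>y\<close> is \<open>r \<times> s\<close>; the objectives \<open>f1\<close> and \<open>f2\<close> are the cases
  \<open>(m, n, m, n)\<close> and \<open>(m, m, n, n)\<close>.\<close>
definition bqap_objective ::
    "nat \<Rightarrow> nat \<Rightarrow> nat \<Rightarrow> nat \<Rightarrow> (nat \<Rightarrow> nat \<Rightarrow> nat \<Rightarrow> nat \<Rightarrow> real) \<Rightarrow> (nat \<Rightarrow> nat \<Rightarrow> real)
      \<Rightarrow> (nat \<Rightarrow> nat \<Rightarrow> real) \<Rightarrow> (nat \<Rightarrow> nat \<Rightarrow> real) \<Rightarrow> (nat \<Rightarrow> nat \<Rightarrow> real) \<Rightarrow> real" where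
  "bqap_objective p q r s Q c d x y =
     (\<Sum>i\<in>{1..p}. \<Sum>j\<in>{1..q}. \<Sum>k\<in>{1..r}. \<Sum>l\<in>{1..s}. Q i j k l * x i j * y k l)
     + (\<Sum>i\<in>{1..p}. \<Sum>j\<in>{1..q}. c i j * x i j)
     + (\<Sum>k\<in>{1..r}. \<Sum>l\<in>{1..s}. d k l * y k l)"

lemma sum_bqap_objective:
  "(\<Sum>(a, b)\<in>A \<times> B. bqap_objective p q r s Q c d (u a) (v b)) =
     (\<Sum>i\<in>{1..p}. \<Sum>j\<in>{1..q}. \<Sum>k\<in>{1..r}. \<Sum>l\<in>{1..s}.
        Q i j k l * (\<Sum>a\<in>A. u a i j) * (\<Sum>b\<in>B. v b k l))
     + real (card B) * (\<Sum>i\<in>{1..p}. \<Sum>j\<in>{1..q}. c i j * (\<Sum>a\<in>A. u a i j))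
     + real (card A) * (\<Sum>k\<in>{1..r}. \<Sum>l\<in>{1..s}. d k l * (\<Sum>b\<in>B. v b k l))"
proof -
  have swap: "(\<Sum>(a, b)\<in>A \<times> B. \<Sum>i\<in>I. g a b i) = (\<Sum>i\<in>I. \<Sum>(a, b)\<in>A \<times> B. g a b i)"
    for I :: "nat set" and g :: "_ \<Rightarrow> _ \<Rightarrow> _ \<Rightarrow> real"
    unfolding split_def by (rule sum.swap)
  have product: "(\<Sum>(a, b)\<in>A \<times> B. K * f a * g b) = K * (\<Sum>a\<in>A. f a) * (\<Sum>b\<in>B. g b)"
    and left: "(\<Sum>(a, b)\<in>A \<times> B. K * f a) = real (card B) * (K * (\<Sum>a\<in>A. f a))"
    and right: "(\<Sum>(a, b)\<in>A \<times> B. K * g b) = real (card A) * (K * (\<Sum>b\<in>B. g b))"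
    for K :: real and f g
    by (simp_all add: sum.cartesian_product[symmetric] sum_product sum_distrib_left mult_ac)
  have quadratic: "(\<Sum>(a, b)\<in>A \<times> B.
        \<Sum>i\<in>{1..p}. \<Sum>j\<in>{1..q}. \<Sum>k\<in>{1..r}. \<Sum>l\<in>{1..s}. Q i j k l * u a i j * v b k l) =
      (\<Sum>i\<in>{1..p}. \<Sum>j\<in>{1..q}. \<Sum>k\<in>{1..r}. \<Sum>l\<in>{1..s}.
        Q i j k l * (\<Sum>a\<in>A. u a i j) * (\<Sum>b\<in>B. v b k l))"
    by (simp only: swap product)
  have linear_x: "(\<Sum>(a, b)\<in>A \<times> B. \<Sum>i\<in>{1..p}. \<Sum>j\<in>{1..q}. c i j * u a i j) =
      real (card B) * (\<Sum>i\<in>{1..p}. \<Sum>j\<in>{1..q}. c i j * (\<Sum>a\<in>A. u a i j))"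
    by (simp only: swap left sum_distrib_left)
  have linear_y: "(\<Sum>(a, b)\<in>A \<times> B. \<Sum>k\<in>{1..r}. \<Sum>l\<in>{1..s}. d k l * v b k l) =
      real (card A) * (\<Sum>k\<in>{1..r}. \<Sum>l\<in>{1..s}. d k l * (\<Sum>b\<in>B. v b k l))"
    by (simp only: swap right sum_distrib_left)
  show ?thesis
    unfolding bqap_objective_def split_def sum.distrib
    by (simp only: quadratic[unfolded split_def] linear_x[unfolded split_def] linear_y[unfolded split_def])
qed

lemma orbit_sum_bqap_objective:
  assumes "x \<in> row_assign p q" "y \<in> col_assign r s"
  shows "(\<Sum>(a, b)\<in>{..<q} \<times> {..<r}.
            bqap_objective p q r s Q c d (shift_cols q a x) (shift_rows r b y)) =
     (\<Sum>i\<in>{1..p}. \<Sum>j\<in>{1..q}. \<Sum>k\<in>{1..r}. \<Sum>l\<in>{1..s}. Q i j k l)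
     + real r * (\<Sum>i\<in>{1..p}. \<Sum>j\<in>{1..q}. c i j)
     + real q * (\<Sum>k\<in>{1..r}. \<Sum>l\<in>{1..s}. d k l)"
proof -
  have "(\<Sum>i\<in>{1..p}. \<Sum>j\<in>{1..q}. \<Sum>k\<in>{1..r}. \<Sum>l\<in>{1..s}.
          Q i j k l * (\<Sum>a<q. shift_cols q a x i j) * (\<Sum>b<r. shift_rows r b y k l)) =
        (\<Sum>i\<in>{1..p}. \<Sum>j\<in>{1..q}. \<Sum>k\<in>{1..r}. \<Sum>l\<in>{1..s}. Q i j k l)"
    using assms by (intro sum.cong refl) (simp add: sum_shift_cols_row_assign sum_shift_rows_col_assign)
  moreover have "(\<Sum>i\<in>{1..p}. \<Sum>j\<in>{1..q}. c i j * (\<Sum>a<q. shift_cols q a x i j)) =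
        (\<Sum>i\<in>{1..p}. \<Sum>j\<in>{1..q}. c i j)"
    using assms by (intro sum.cong refl) (simp add: sum_shift_cols_row_assign)
  moreover have "(\<Sum>k\<in>{1..r}. \<Sum>l\<in>{1..s}. d k l * (\<Sum>b<r. shift_rows r b y k l)) =
        (\<Sum>k\<in>{1..r}. \<Sum>l\<in>{1..s}. d k l)"
    using assms by (intro sum.cong refl) (simp add: sum_shift_rows_col_assign)
  ultimately show ?thesis
    by (simp only: sum_bqap_objective card_lessThan)
qed

lemma card_ge_average_bqap_objective:
  assumes "1 \<le> p" "1 \<le> q" "1 \<le> r" "1 \<le> s"
  defines "F \<equiv> row_assign p q \<times> col_assign r s"
  shows "q ^ (p - 1) * r ^ (s - 1) \<le> card {(x, y) \<in> F.
     (\<Sum>(x, y)\<in>F. bqap_objective p q r s Q c d x y) / real (card F) \<le> bqap_objective p q r s Q c d x y}"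
    (is "_ \<le> card ?G")
proof -
  define h where "h = (\<lambda>(x, y). bqap_objective p q r s Q c d x y)"
  define \<phi> where "\<phi> = (\<lambda>(a, b). map_prod (shift_cols q a) (shift_rows r b))"
  have card_F: "q ^ p * r ^ s \<le> card F"
    using power_le_card_row_assign[of q p] power_le_card_col_assign[of r s]
    by (simp add: F_def card_cartesian_product mult_le_mono)
  have "finite F"
    by (simp add: F_def finite_row_assign finite_col_assign)
  moreover have "F \<noteq> {}"
    using card_F assms by auto
  moreover have "finite ({..<q} \<times> {..<r})" "{..<q} \<times> {..<r} \<noteq> {}"
    using assms by (auto simp: lessThan_empty_iff)
  moreover have "bij_betw (\<phi> t) F F" for t
    by (cases t) (simp add: \<phi>_def F_def bij_betw_map_prod bij_betw_shift_cols bij_betw_shift_rows)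
  moreover have "(\<Sum>t\<in>{..<q} \<times> {..<r}. h (\<phi> t z)) =
      (\<Sum>i\<in>{1..p}. \<Sum>j\<in>{1..q}. \<Sum>k\<in>{1..r}. \<Sum>l\<in>{1..s}. Q i j k l)
      + real r * (\<Sum>i\<in>{1..p}. \<Sum>j\<in>{1..q}. c i j)
      + real q * (\<Sum>k\<in>{1..r}. \<Sum>l\<in>{1..s}. d k l)" if "z \<in> F" for z
    using that orbit_sum_bqap_objective[of "fst z" p q "snd z" r s Q c d]
    by (auto simp: F_def h_def \<phi>_def split_def)
  ultimately have "card F \<le> card ({..<q} \<times> {..<r}) * card {z\<in>F. (\<Sum>z\<in>F. h z) / card F \<le> h z}"
    by (rule averaging_card_bound)
  also have "{z\<in>F. (\<Sum>z\<in>F. h z) / card F \<le> h z} = ?G"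
    by (auto simp: h_def)
  finally have "q ^ p * r ^ s \<le> q * r * card ?G"
    using card_F by simp
  moreover have "q ^ p * r ^ s = q * r * (q ^ (p - 1) * r ^ (s - 1))"
    using assms by (cases p; cases s) (simp_all add: mult_ac)
  ultimately show ?thesis
    using assms by simp
qed

theorem theorem2:
  fixes m n :: nat
  assumes "m \<ge> 1" and "n \<ge> 1"
  shows "(\<forall>Q c d. card {(x, y) \<in> feas1 m n. f1 m n Q c d x y \<ge> A1 m n Q c d}
                    \<ge> n ^ (m - 1) * m ^ (n - 1))
       \<and> (\<forall>Q c d. card {(x, y) \<in> feas2 m n. f2 m n Q c d x y \<ge> A2 m n Q c d}
                    \<ge> m ^ (m - 1) * n ^ (n - 1))"
proof (intro conjI allI)
  fix Q c d
  have "f1 m n Q c d = bqap_objective m n m n Q c d"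
    unfolding f1_def bqap_objective_def fun_eq_iff
    by (simp only: sum.swap[where A = "{1..n}" and B = "{1..m}"] simp_thms)
  then show "n ^ (m - 1) * m ^ (n - 1) \<le> card {(x, y) \<in> feas1 m n. f1 m n Q c d x y \<ge> A1 m n Q c d}"
    using card_ge_average_bqap_objective[of m n m n Q c d] assms
    by (simp add: A1_def feas1_def)
next
  fix Q c d
  have "f2 m n Q c d = bqap_objective m m n n Q c d"
    by (simp add: fun_eq_iff f2_def bqap_objective_def)
  then show "m ^ (m - 1) * n ^ (n - 1) \<le> card {(x, y) \<in> feas2 m n. f2 m n Q c d x y \<ge> A2 m n Q c d}"
    using card_ge_average_bqap_objective[of m m n n Q c d] assms
    by (simp add: A2_def feas2_def)
qed

end
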